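(* Let $T=(V,E)$ be a simple graph and let $S=(U,F)$ be a subgraph of $T$ which is a tree. Suppose $T'=(V',E')$ is formed from $T$ by a $1$-dimensional $|F|$-extension which deletes exactly the edges in $F$ and appends a new vertex $v$ incident to $|F|+1$ new edges. Then $T$ is a tree if and only if $T'$ is a tree.
   Context: All graphs are finite and loop-free; multi-graphs may have parallel edges. For a multi-graph $G$ and integers $d\ge 1$, $j\ge 0$, a $d$-dimensional $j$-extension of $G$ forms a new multi-graph $G'$ by deleting a set $F$ of $j$ edges of $G$ and then adding a new vertex $v$ together with $d+j$ new edges joining $v$ to vertices of $G$ (parallel new edges are allowed), in such a way that every endpoint of an edge of $F$ is a neighbour of $v$ in $G'$. (For $d=1$ arbitrary $j\ge 0$ is allowed.) *)

theory Defs
  imports Main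
begin

text \<open>A multigraph is given by a vertex set V, a set E of edge identifiers and an
  endpoint map g assigning to each edge its two-element set of endpoints (loop-free;
  parallel edges are distinct identifiers with the same endpoint set).\<close>

definition multigraph :: "'a set \<Rightarrow> 'e set \<Rightarrow> ('e \<Rightarrow> 'a set) \<Rightarrow> bool" where
  "multigraph V E g \<longleftrightarrow> finite V \<and> finite E \<and> (\<forall>e\<in>E. g e \<subseteq> V \<and> card (g e) = 2)"

definition simple_graph :: "'a set \<Rightarrow> 'e set \<Rightarrow> ('e \<Rightarrow> 'a set) \<Rightarrow> bool" where
  "simple_graph V E g \<longleftrightarrow> multigraph V E g \<and> inj_on g E"

definition adj_rel :: "'e set \<Rightarrow> ('e \<Rightarrow> 'a set) \<Rightarrow> ('a \<times> 'a) set" where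
  "adj_rel E g = {(x, y). \<exists>e\<in>E. g e = {x, y}}"

definition connected_graph :: "'a set \<Rightarrow> 'e set \<Rightarrow> ('e \<Rightarrow> 'a set) \<Rightarrow> bool" where
  "connected_graph V E g \<longleftrightarrow> V \<noteq> {} \<and> (\<forall>x\<in>V. \<forall>y\<in>V. (x, y) \<in> (adj_rel E g)\<^sup>*)"

text \<open>A cycle: distinct vertices v_0..v_{k-1} and distinct edges e_0..e_{k-1} (k \<ge> 2)
  with e_i joining v_i and v_{i+1 mod k}. For k = 2 this is a pair of parallel edges.\<close>

definition has_cycle :: "'a set \<Rightarrow> 'e set \<Rightarrow> ('e \<Rightarrow> 'a set) \<Rightarrow> bool" where
  "has_cycle V E g \<longleftrightarrow> (\<exists>vs es. length vs = length es \<and> 2 \<le> length vs \<and>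
      distinct vs \<and> distinct es \<and> set vs \<subseteq> V \<and> set es \<subseteq> E \<and>
      (\<forall>i<length vs. g (es ! i) = {vs ! i, vs ! ((i + 1) mod length vs)}))"

definition is_tree :: "'a set \<Rightarrow> 'e set \<Rightarrow> ('e \<Rightarrow> 'a set) \<Rightarrow> bool" where
  "is_tree V E g \<longleftrightarrow> multigraph V E g \<and> connected_graph V E g \<and> \<not> has_cycle V E g"

definition subgraph :: "'a set \<Rightarrow> 'e set \<Rightarrow> 'a set \<Rightarrow> 'e set \<Rightarrow> ('e \<Rightarrow> 'a set) \<Rightarrow> bool" where
  "subgraph U F V E g \<longleftrightarrow> U \<subseteq> V \<and> F \<subseteq> E \<and> (\<forall>e\<in>F. g e \<subseteq> U)"

definition extension ::
  "nat \<Rightarrow> nat \<Rightarrow> 'a set \<Rightarrow> 'e set \<Rightarrow> ('e \<Rightarrow> 'a set) \<Rightarrow> 'e set \<Rightarrow> 'a \<Rightarrow>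
   'a set \<Rightarrow> 'e set \<Rightarrow> ('e \<Rightarrow> 'a set) \<Rightarrow> bool" where
  "extension d j V E g F v V' E' g' \<longleftrightarrow>
     multigraph V E g \<and> F \<subseteq> E \<and> card F = j \<and> v \<notin> V \<and> V' = insert v V \<and>
     E - F \<subseteq> E' \<and> finite E' \<and> card (E' - (E - F)) = d + j \<and>
     (\<forall>e\<in>E - F. g' e = g e) \<and>
     (\<forall>e\<in>E' - (E - F). \<exists>u\<in>V. g' e = {v, u}) \<and>
     (\<forall>e\<in>F. \<forall>x\<in>g e. \<exists>n\<in>E' - (E - F). g' n = {v, x})"

end

theory Submission
  imports Defs
begin

text \<open>A finite multigraph is a tree iff it is connected and has one more vertex than
  edges: in a connected graph, choosing for every non-root vertex an edge to a vertex closer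
  to the root gives an injection of all but one vertex into the edges, every edge outside its
  image closes a cycle, and deleting an edge of a cycle keeps the graph connected.
  A 1-dimensional extension adds one vertex and one edge, so only connectivity has to be
  compared. Connectivity passes from T to T' since each deleted edge is replaced by a path
  through v. Conversely, the |F| + 1 vertices of the tree S are endpoints of deleted edges
  and so all are neighbours of v; as there are only |F| + 1 new edges, every new edge ends
  in S, and mapping v to a vertex of S turns walks of T' into walks of T.\<close>

lemma adj_rel_sym: "sym (adj_rel E g)"
  unfolding adj_rel_def by (auto intro: symI simp: insert_commute)

lemma adj_rel_rtrancl_sym: "(x, y) \<in> (adj_rel E g)\<^sup>* \<Longrightarrow> (y, x) \<in> (adj_rel E g)\<^sup>*"
  using sym_rtrancl[OF adj_rel_sym] by (rule symD)

lemma adj_rel_mono: "E1 \<subseteq> E2 \<Longrightarrow> adj_rel E1 g \<subseteq> adj_rel E2 g"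
  unfolding adj_rel_def by blast

lemma rtrancl_imp_distinct_walk:
  assumes "(a, b) \<in> R\<^sup>*"
  obtains ws where "ws \<noteq> []" "hd ws = a" "last ws = b" "distinct ws"
    "successively (\<lambda>x y. (x, y) \<in> R) ws"
proof -
  have "\<exists>ws. ws \<noteq> [] \<and> hd ws = a \<and> last ws = b \<and> distinct ws \<and>
      successively (\<lambda>x y. (x, y) \<in> R) ws"
    using assms
  proof (induction rule: rtrancl_induct)
    case base
    show ?case by (intro exI[of _ "[a]"]) simp
  next
    case (step c b)
    then obtain ws where ws: "ws \<noteq> []" "hd ws = a" "last ws = c" "distinct ws"
      "successively (\<lambda>x y. (x, y) \<in> R) ws" by blast
    show ?case
    proof (cases "b \<in> set ws")
      case True
      then obtain k where k: "k < length ws" "ws ! k = b" by (auto simp: in_set_conv_nth)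
      have "successively (\<lambda>x y. (x, y) \<in> R) (take (Suc k) ws)"
        using ws(5) successively_append_iff[of _ "take (Suc k) ws" "drop (Suc k) ws"] by simp
      moreover have "hd (take (Suc k) ws) = a" using ws(1,2) by simp
      moreover have "last (take (Suc k) ws) = b" using k by (simp add: take_Suc_conv_app_nth)
      ultimately show ?thesis
        using ws(1,4) by (intro exI[of _ "take (Suc k) ws"]) simp
    next
      case False
      with ws step.hyps(2) show ?thesis
        by (intro exI[of _ "ws @ [b]"]) (auto simp: successively_append_iff)
    qed
  qed
  with that show ?thesis by blast
qed

lemma distinct_consecutive_pairs_eq:
  assumes "distinct ws" "Suc i < length ws" "Suc j < length ws"
    and "{ws ! i, ws ! Suc i} = {ws ! j, ws ! Suc j}"
  shows "i = j"
  using assms by (auto simp: doubleton_eq_iff nth_eq_iff_index_eq)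

lemma distinct_walk_edges:
  assumes "distinct ws" "successively (\<lambda>x y. (x, y) \<in> adj_rel E g) ws"
  obtains fs where "length fs = length ws - 1" "distinct fs" "set fs \<subseteq> E"
    "\<And>i. i < length fs \<Longrightarrow> g (fs ! i) = {ws ! i, ws ! Suc i}"
proof -
  have "\<exists>f. f \<in> E \<and> g f = {ws ! i, ws ! Suc i}" if "i < length ws - 1" for i
  proof -
    have "(ws ! i, ws ! Suc i) \<in> adj_rel E g" using successively_nth[OF assms(2)] that by simp
    then show ?thesis unfolding adj_rel_def by blast
  qed
  then obtain f where f: "\<And>i. i < length ws - 1 \<Longrightarrow> f i \<in> E \<and> g (f i) = {ws ! i, ws ! Suc i}"
    by metis
  have "inj_on f {0..<length ws - 1}"
  proof (rule inj_onI)
    fix i j assume i: "i \<in> {0..<length ws - 1}" and j: "j \<in> {0..<length ws - 1}"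
      and "f i = f j"
    then have "g (f i) = g (f j)" by simp
    with f i j have "{ws ! i, ws ! Suc i} = {ws ! j, ws ! Suc j}" by simp
    moreover have "Suc i < length ws" "Suc j < length ws" using i j by auto
    ultimately show "i = j" using distinct_consecutive_pairs_eq[OF assms(1)] by blast
  qed
  then show ?thesis using f by (intro that[of "map f [0..<length ws - 1]"]) (auto simp: distinct_map)
qed

lemma has_cycleI_bypass:
  assumes mg: "multigraph V E g" and e: "e \<in> E" "g e = {a, b}" "a \<noteq> b"
    and bypass: "(a, b) \<in> (adj_rel (E - {e}) g)\<^sup>*"
  shows "has_cycle V E g"
proof -
  obtain ws where ws: "ws \<noteq> []" "hd ws = a" "last ws = b" "distinct ws"
    and walk: "successively (\<lambda>x y. (x, y) \<in> adj_rel (E - {e}) g) ws"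
    using rtrancl_imp_distinct_walk[OF bypass] by blast
  obtain fs where fs: "length fs = length ws - 1" "distinct fs" "set fs \<subseteq> E - {e}"
    and fs_ends: "\<And>i. i < length fs \<Longrightarrow> g (fs ! i) = {ws ! i, ws ! Suc i}"
    using distinct_walk_edges[OF ws(4) walk] by blast
  define m where "m = length ws"
  have m: "2 \<le> m"
    using ws(1-3) e(3) unfolding m_def by (cases ws) (auto simp: Suc_le_eq split: if_splits)
  have ends: "ws ! 0 = a" "ws ! (m - 1) = b"
    using ws(1-3) by (simp_all add: m_def hd_conv_nth last_conv_nth)
  have "set ws \<subseteq> V"
  proof
    fix x assume "x \<in> set ws"
    then obtain k where k: "k < m" "x = ws ! k" by (auto simp: in_set_conv_nth m_def)
    show "x \<in> V"
    proof (cases "k < m - 1")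
      case True
      then have "fs ! k \<in> set fs" "x \<in> g (fs ! k)" using fs(1) fs_ends[of k] k(2) by (auto simp: m_def)
      then have "fs ! k \<in> E" "x \<in> g (fs ! k)" using fs(3) by auto
      then show ?thesis using mg unfolding multigraph_def by blast
    next
      case False
      with k have "k = m - 1" by simp
      with k ends have "x = b" by simp
      then show ?thesis using e mg unfolding multigraph_def by auto
    qed
  qed
  moreover have "\<forall>i<length ws. g ((fs @ [e]) ! i) = {ws ! i, ws ! ((i + 1) mod length ws)}"
    unfolding m_def[symmetric]
  proof (intro allI impI)
    fix i assume i: "i < m"
    show "g ((fs @ [e]) ! i) = {ws ! i, ws ! ((i + 1) mod m)}"
    proof (cases "i < m - 1")
      case True
      then show ?thesis using fs_ends[of i] fs(1) by (simp add: m_def nth_append)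
    next
      case False
      with i have "i = m - 1" by simp
      moreover from this m have "(i + 1) mod m = 0" by simp
      ultimately show ?thesis using e(2) ends fs(1) by (simp add: m_def nth_append insert_commute)
    qed
  qed
  moreover have "length ws = length (fs @ [e])" "2 \<le> length ws" using fs(1) m by (auto simp: m_def)
  moreover have "distinct (fs @ [e])" "set (fs @ [e]) \<subseteq> E" using fs(2,3) e(1) by auto
  ultimately show ?thesis unfolding has_cycle_def using ws(4) by blast
qed

lemma successively_imp_rtrancl:
  "successively (\<lambda>x y. (x, y) \<in> R) ws \<Longrightarrow> ws \<noteq> [] \<Longrightarrow> (hd ws, last ws) \<in> R\<^sup>*"
  by (induction "\<lambda>x y. (x, y) \<in> R" ws rule: successively.induct) auto

lemma has_cycleE_bypass:
  assumes "has_cycle V E g"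
  obtains e a b where "e \<in> E" "g e = {a, b}" "(a, b) \<in> (adj_rel (E - {e}) g)\<^sup>*"
proof -
  obtain vs es where c: "length vs = length es" "2 \<le> length vs" "distinct es" "set es \<subseteq> E"
    and ends: "\<And>i. i < length vs \<Longrightarrow> g (es ! i) = {vs ! i, vs ! ((i + 1) mod length vs)}"
    using assms unfolding has_cycle_def by blast
  define k where "k = length vs"
  define e where "e = es ! (k - 1)"
  have k: "Suc (k - 1) = k" "k - 1 < length es" "vs \<noteq> []" using c(1,2) k_def by auto
  have e: "e \<in> E" using c(4) k(2) by (simp add: e_def subset_iff)
  have ge: "g e = {last vs, hd vs}"
    using ends[of "k - 1"] k by (simp add: e_def k_def hd_conv_nth last_conv_nth)
  have "successively (\<lambda>x y. (x, y) \<in> adj_rel (E - {e}) g) vs"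
    unfolding successively_conv_nth
  proof (intro allI impI)
    fix i assume i: "Suc i < length vs"
    then have "es ! i \<noteq> e" using c(1,3) k(2) by (simp add: e_def k_def nth_eq_iff_index_eq)
    moreover have "es ! i \<in> E" using c(1,4) i by (simp add: subset_iff)
    moreover have "g (es ! i) = {vs ! i, vs ! Suc i}" using ends[of i] i by simp
    ultimately show "(vs ! i, vs ! Suc i) \<in> adj_rel (E - {e}) g"
      unfolding adj_rel_def by blast
  qed
  then have "(hd vs, last vs) \<in> (adj_rel (E - {e}) g)\<^sup>*"
    using k(3) by (rule successively_imp_rtrancl)
  then have "(last vs, hd vs) \<in> (adj_rel (E - {e}) g)\<^sup>*" by (rule adj_rel_rtrancl_sym)
  with e ge show ?thesis by (rule that)
qed

definition hop_dist :: "'e set \<Rightarrow> ('e \<Rightarrow> 'a set) \<Rightarrow> 'a \<Rightarrow> 'a \<Rightarrow> nat" where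
  "hop_dist E g r y = (LEAST n. (r, y) \<in> adj_rel E g ^^ n)"

lemma hop_dist_relpow:
  assumes "(r, y) \<in> adj_rel E g ^^ n"
  shows "(r, y) \<in> adj_rel E g ^^ hop_dist E g r y" "hop_dist E g r y \<le> n"
  using assms unfolding hop_dist_def by (auto intro: LeastI Least_le)

lemma hop_dist_parent_edge:
  assumes "(r, y) \<in> (adj_rel E g)\<^sup>*" "y \<noteq> r"
  obtains e p where "e \<in> E" "g e = {p, y}" "Suc (hop_dist E g r p) = hop_dist E g r y"
proof -
  let ?R = "adj_rel E g"
  obtain n where "(r, y) \<in> ?R ^^ n" using assms(1) by (auto dest: rtrancl_imp_relpow)
  then have ry: "(r, y) \<in> ?R ^^ hop_dist E g r y" by (rule hop_dist_relpow)
  with assms(2) obtain m where m: "hop_dist E g r y = Suc m" by (cases "hop_dist E g r y") auto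
  with ry obtain p where rp: "(r, p) \<in> ?R ^^ m" and py: "(p, y) \<in> ?R" by auto
  then have "(r, y) \<in> ?R ^^ Suc (hop_dist E g r p)"
    using hop_dist_relpow(1)[OF rp] by auto
  then have "hop_dist E g r y \<le> Suc (hop_dist E g r p)" by (rule hop_dist_relpow(2))
  moreover have "hop_dist E g r p \<le> m" using rp by (rule hop_dist_relpow(2))
  ultimately have "Suc (hop_dist E g r p) = hop_dist E g r y" using m by linarith
  moreover obtain e where "e \<in> E" "g e = {p, y}" using py unfolding adj_rel_def by blast
  ultimately show ?thesis using that by blast
qed

lemma connected_spanning_parent_edges:
  assumes mg: "multigraph V E g" and c: "connected_graph V E g"
  obtains r pe where "r \<in> V" "inj_on pe (V - {r})" "pe ` (V - {r}) \<subseteq> E"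
    "\<forall>y\<in>V. (r, y) \<in> (adj_rel (pe ` (V - {r})) g)\<^sup>*"
proof -
  obtain r where r: "r \<in> V" using c unfolding connected_graph_def by blast
  let ?d = "hop_dist E g r"
  have "\<forall>y\<in>V - {r}. \<exists>e. e \<in> E \<and> (\<exists>p. g e = {p, y} \<and> Suc (?d p) = ?d y)"
    using hop_dist_parent_edge c r unfolding connected_graph_def by (metis DiffE singletonI)
  then obtain pe where pe: "\<And>y. y \<in> V - {r} \<Longrightarrow>
      pe y \<in> E \<and> (\<exists>p. g (pe y) = {p, y} \<and> Suc (?d p) = ?d y)"
    by metis
  have "inj_on pe (V - {r})"
  proof (rule inj_onI)
    fix y1 y2 assume y: "y1 \<in> V - {r}" "y2 \<in> V - {r}" and eq: "pe y1 = pe y2"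
    obtain p1 p2 where "g (pe y1) = {p1, y1}" "Suc (?d p1) = ?d y1"
      "g (pe y2) = {p2, y2}" "Suc (?d p2) = ?d y2"
      using pe[OF y(1)] pe[OF y(2)] by blast
    \<comment> \<open>a shared edge would make each of y1, y2 the parent of the other\<close>
    with eq show "y1 = y2" by (auto simp: doubleton_eq_iff)
  qed
  moreover have "pe ` (V - {r}) \<subseteq> E" using pe by blast
  moreover have "\<forall>y\<in>V. (r, y) \<in> (adj_rel (pe ` (V - {r})) g)\<^sup>*"
  proof
    fix y assume "y \<in> V"
    then show "(r, y) \<in> (adj_rel (pe ` (V - {r})) g)\<^sup>*"
    proof (induction "?d y" arbitrary: y rule: less_induct)
      case less
      show ?case
      proof (cases "y = r")
        case False
        then obtain p where p: "g (pe y) = {p, y}" "Suc (?d p) = ?d y"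
          using pe less.prems by blast
        have "p \<in> V" using pe less.prems False p(1) mg unfolding multigraph_def by blast
        then have "(r, p) \<in> (adj_rel (pe ` (V - {r})) g)\<^sup>*" using less.hyps p(2) by simp
        moreover have "(p, y) \<in> adj_rel (pe ` (V - {r})) g"
          unfolding adj_rel_def using p(1) less.prems False by blast
        ultimately show ?thesis by simp
      qed simp
    qed
  qed
  ultimately show ?thesis by (rule that[OF r])
qed

lemma connected_card_vertices_le:
  assumes "multigraph V E g" "connected_graph V E g"
  shows "card V \<le> card E + 1"
proof -
  obtain r pe where r: "r \<in> V" "inj_on pe (V - {r})" "pe ` (V - {r}) \<subseteq> E"
    using connected_spanning_parent_edges[OF assms] by metis
  have "finite E" using assms(1) unfolding multigraph_def by blast
  then have "card (V - {r}) \<le> card E" using card_inj_on_le[OF r(2,3)] by blast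
  then show ?thesis using r(1) by simp
qed

lemma connected_acyclic_card_vertices_ge:
  assumes mg: "multigraph V E g" and c: "connected_graph V E g" and acyclic: "\<not> has_cycle V E g"
  shows "card E + 1 \<le> card V"
proof -
  obtain r pe where r: "r \<in> V" "inj_on pe (V - {r})" "pe ` (V - {r}) \<subseteq> E"
    and span: "\<forall>y\<in>V. (r, y) \<in> (adj_rel (pe ` (V - {r})) g)\<^sup>*"
    by (rule connected_spanning_parent_edges[OF mg c])
  have fin: "finite V" using mg unfolding multigraph_def by blast
  have "E \<subseteq> pe ` (V - {r})"
  proof
    fix e assume e: "e \<in> E"
    show "e \<in> pe ` (V - {r})"
    proof (rule ccontr)
      assume "e \<notin> pe ` (V - {r})"
      then have sub: "adj_rel (pe ` (V - {r})) g \<subseteq> adj_rel (E - {e}) g"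
        using r(3) by (intro adj_rel_mono) blast
      have "card (g e) = 2" "g e \<subseteq> V" using mg e unfolding multigraph_def by auto
      then obtain a b where ab: "g e = {a, b}" "a \<noteq> b" "a \<in> V" "b \<in> V"
        by (metis card_2_iff insert_subset)
      then have "(r, a) \<in> (adj_rel (E - {e}) g)\<^sup>*" "(r, b) \<in> (adj_rel (E - {e}) g)\<^sup>*"
        using span rtrancl_mono[OF sub] by blast+
      then have "(a, b) \<in> (adj_rel (E - {e}) g)\<^sup>*"
        by (meson adj_rel_rtrancl_sym rtrancl_trans)
      then show False using has_cycleI_bypass[OF mg e ab(1,2)] acyclic by blast
    qed
  qed
  then have "card E \<le> card (pe ` (V - {r}))" using fin by (intro card_mono) auto
  also have "\<dots> = card V - 1" using card_image[OF r(2)] r(1) by simp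
  finally have "card E \<le> card V - 1" .
  moreover have "0 < card V" using r(1) fin card_gt_0_iff by blast
  ultimately show ?thesis by linarith
qed

lemma connected_cyclic_card_vertices_le:
  assumes mg: "multigraph V E g" and c: "connected_graph V E g" and cyclic: "has_cycle V E g"
  shows "card V \<le> card E"
proof -
  obtain e a b where e: "e \<in> E" "g e = {a, b}"
    and bypass: "(a, b) \<in> (adj_rel (E - {e}) g)\<^sup>*"
    using has_cycleE_bypass[OF cyclic] by blast
  have "adj_rel E g \<subseteq> (adj_rel (E - {e}) g)\<^sup>*"
  proof (rule subrelI)
    fix x y assume "(x, y) \<in> adj_rel E g"
    then obtain f where f: "f \<in> E" "g f = {x, y}" unfolding adj_rel_def by blast
    show "(x, y) \<in> (adj_rel (E - {e}) g)\<^sup>*"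
    proof (cases "f = e")
      case True
      with f e have "(x = a \<and> y = b) \<or> (x = b \<and> y = a)" by (auto simp: doubleton_eq_iff)
      then show ?thesis using bypass adj_rel_rtrancl_sym[OF bypass] by auto
    next
      case False
      with f show ?thesis unfolding adj_rel_def by blast
    qed
  qed
  then have "(adj_rel E g)\<^sup>* \<subseteq> (adj_rel (E - {e}) g)\<^sup>*" by (rule rtrancl_subset_rtrancl)
  then have "connected_graph V (E - {e}) g" using c unfolding connected_graph_def by blast
  moreover have "multigraph V (E - {e}) g" using mg unfolding multigraph_def by blast
  ultimately have "card V \<le> card (E - {e}) + 1" by (rule connected_card_vertices_le[rotated])
  moreover have "0 < card E" using mg e(1) card_gt_0_iff unfolding multigraph_def by blast
  ultimately show ?thesis using e(1) by simp
qed

lemma is_tree_iff_connected_card: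
  assumes "multigraph V E g"
  shows "is_tree V E g \<longleftrightarrow> connected_graph V E g \<and> card E + 1 = card V"
proof (cases "connected_graph V E g")
  case True
  have "card V \<le> card E + 1" using connected_card_vertices_le[OF assms True] .
  moreover have "\<not> has_cycle V E g \<longleftrightarrow> card E + 1 \<le> card V"
    using connected_acyclic_card_vertices_ge[OF assms True]
      connected_cyclic_card_vertices_le[OF assms True] by fastforce
  ultimately show ?thesis using assms True unfolding is_tree_def by linarith
qed (simp add: is_tree_def)

lemma extension_multigraph:
  assumes "extension d j V E g F v V' E' g'"
  shows "multigraph V' E' g'"
proof -
  have old: "\<forall>e\<in>E - F. g' e = g e \<and> g e \<subseteq> V \<and> card (g e) = 2"
    and new: "\<forall>e\<in>E' - (E - F). \<exists>u\<in>V. g' e = {v, u}"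
    and v: "v \<notin> V" "V' = insert v V" and fin: "finite V" "finite E'"
    using assms unfolding extension_def multigraph_def by auto
  have "g' e \<subseteq> V' \<and> card (g' e) = 2" if "e \<in> E'" for e
  proof (cases "e \<in> E - F")
    case False
    with new that obtain u where "u \<in> V" "g' e = {v, u}" by blast
    moreover from this v have "u \<noteq> v" by blast
    ultimately show ?thesis using v by simp
  qed (use old v in auto)
  with fin v show ?thesis unfolding multigraph_def by blast
qed

lemma extension_card_vertices:
  "extension d j V E g F v V' E' g' \<Longrightarrow> card V' = card V + 1"
  unfolding extension_def multigraph_def by auto

lemma extension_card_edges:
  assumes "extension d j V E g F v V' E' g'"
  shows "card E' = card E + d"
proof -
  have FE: "F \<subseteq> E" "card F = j" and fin: "finite E" "finite E'"
    and E': "E - F \<subseteq> E'" "card (E' - (E - F)) = d + j"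
    using assms unfolding extension_def multigraph_def by auto
  have "card E' = card (E - F) + card (E' - (E - F))"
    using fin E'(1) card_Diff_subset[of "E - F" E'] card_mono[of E' "E - F"] by fastforce
  moreover have "card (E - F) + j = card E"
    using FE fin card_Diff_subset[of F E] card_mono[of E F] finite_subset by fastforce
  ultimately show ?thesis using E'(2) by linarith
qed

lemma extension_new_edge_exists:
  assumes "extension d j V E g F v V' E' g'" "0 < d"
  obtains n u where "n \<in> E' - (E - F)" "u \<in> V" "g' n = {v, u}"
proof -
  from assms have "E' - (E - F) \<noteq> {}" unfolding extension_def by auto
  then show ?thesis using assms(1) that unfolding extension_def by blast
qed

lemma extension_connected:
  assumes ext: "extension d j V E g F v V' E' g'" and "0 < d" and c: "connected_graph V E g"
  shows "connected_graph V' E' g'"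
proof -
  let ?R' = "adj_rel E' g'"
  have old: "\<forall>e\<in>E - F. e \<in> E' \<and> g' e = g e" and V': "V' = insert v V"
    using ext unfolding extension_def by auto
  have reroute: "\<forall>e\<in>F. \<forall>x\<in>g e. \<exists>n\<in>E'. g' n = {v, x}"
    using ext unfolding extension_def by blast
  have "adj_rel E g \<subseteq> ?R'\<^sup>*"
  proof (rule subrelI)
    fix a b assume "(a, b) \<in> adj_rel E g"
    then obtain e where e: "e \<in> E" "g e = {a, b}" unfolding adj_rel_def by blast
    show "(a, b) \<in> ?R'\<^sup>*"
    proof (cases "e \<in> F")
      case True
      have "a \<in> g e" "b \<in> g e" using e(2) by simp_all
      then obtain na nb where "na \<in> E'" "g' na = {v, a}" "nb \<in> E'" "g' nb = {v, b}"
        using reroute True by meson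
      then have "(a, v) \<in> ?R'" "(v, b) \<in> ?R'" unfolding adj_rel_def by (auto simp: insert_commute)
      then show ?thesis by (meson r_into_rtrancl rtrancl_trans)
    next
      case False
      with e old have "e \<in> E'" "g' e = {a, b}" by auto
      then have "(a, b) \<in> ?R'" unfolding adj_rel_def by blast
      then show ?thesis by simp
    qed
  qed
  then have sub: "(adj_rel E g)\<^sup>* \<subseteq> ?R'\<^sup>*" by (rule rtrancl_subset_rtrancl)
  obtain n u0 where n: "n \<in> E' - (E - F)" "u0 \<in> V" "g' n = {v, u0}"
    using extension_new_edge_exists[OF ext \<open>0 < d\<close>] .
  then have "(v, u0) \<in> ?R'" unfolding adj_rel_def by blast
  have reach: "(v, x) \<in> ?R'\<^sup>*" if "x \<in> V'" for x
  proof (cases "x = v")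
    case False
    with that V' have "(u0, x) \<in> (adj_rel E g)\<^sup>*" using n(2) c unfolding connected_graph_def by blast
    with sub \<open>(v, u0) \<in> ?R'\<close> show ?thesis by (blast intro: converse_rtrancl_into_rtrancl)
  qed simp
  show ?thesis unfolding connected_graph_def
  proof (intro conjI ballI)
    show "V' \<noteq> {}" using V' by blast
    fix x y assume "x \<in> V'" "y \<in> V'"
    with reach show "(x, y) \<in> ?R'\<^sup>*" by (meson adj_rel_rtrancl_sym rtrancl_trans)
  qed
qed

lemma extension_connected_converse:
  assumes ext: "extension d j V E g F v V' E' g'" and "0 < d"
    and linked: "\<And>n m x y. n \<in> E' - (E - F) \<Longrightarrow> m \<in> E' - (E - F) \<Longrightarrow>
      g' n = {v, x} \<Longrightarrow> g' m = {v, y} \<Longrightarrow> (x, y) \<in> (adj_rel E g)\<^sup>*"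
    and c': "connected_graph V' E' g'"
  shows "connected_graph V E g"
proof -
  let ?R = "adj_rel E g"
  have mg: "multigraph V E g" and v: "v \<notin> V" "V' = insert v V"
    and old: "\<forall>e\<in>E - F. g' e = g e" and new: "\<forall>e\<in>E' - (E - F). \<exists>u\<in>V. g' e = {v, u}"
    using ext unfolding extension_def by auto
  obtain n0 u0 where n0: "n0 \<in> E' - (E - F)" "u0 \<in> V" "g' n0 = {v, u0}"
    using extension_new_edge_exists[OF ext \<open>0 < d\<close>] .
  define contract where "contract x = (if x = v then u0 else x)" for x
  have contract_edge: "(contract x, contract y) \<in> ?R\<^sup>*" if xy: "(x, y) \<in> adj_rel E' g'" for x y
  proof -
    obtain e where e: "e \<in> E'" "g' e = {x, y}" using xy unfolding adj_rel_def by blast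
    show ?thesis
    proof (cases "e \<in> E - F")
      case True
      with e old have "g e = {x, y}" by simp
      moreover from this True mg v have "x \<noteq> v" "y \<noteq> v" unfolding multigraph_def by auto
      ultimately show ?thesis using True unfolding contract_def adj_rel_def by auto
    next
      case False
      with e new obtain u where u: "u \<in> V" "g' e = {v, u}" by blast
      with e v have "(x = v \<and> y = u) \<or> (x = u \<and> y = v)" "u \<noteq> v"
        by (auto simp: doubleton_eq_iff)
      moreover have "(u0, u) \<in> ?R\<^sup>*" using linked n0 False e u by blast
      ultimately show ?thesis unfolding contract_def using adj_rel_rtrancl_sym by auto
    qed
  qed
  have contract_reach: "(contract x, contract y) \<in> ?R\<^sup>*" if "(x, y) \<in> (adj_rel E' g')\<^sup>*" for x y
    using that by (induction rule: rtrancl_induct) (auto dest: contract_edge intro: rtrancl_trans)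
  show ?thesis unfolding connected_graph_def
  proof (intro conjI ballI)
    show "V \<noteq> {}" using n0(2) by blast
    fix x y assume "x \<in> V" "y \<in> V"
    moreover from this v have "contract x = x" "contract y = y" by (auto simp: contract_def)
    ultimately show "(x, y) \<in> ?R\<^sup>*"
      using contract_reach c' v unfolding connected_graph_def by (metis insertCI)
  qed
qed

lemma connected_vertex_incident:
  assumes mg: "multigraph U F g" and c: "connected_graph U F g" and "F \<noteq> {}" and x: "x \<in> U"
  obtains f where "f \<in> F" "x \<in> g f"
proof -
  obtain f0 where f0: "f0 \<in> F" using \<open>F \<noteq> {}\<close> by blast
  then have "card (g f0) = 2" "g f0 \<subseteq> U" using mg unfolding multigraph_def by auto
  then obtain y where y: "y \<in> U" "y \<noteq> x" by (metis card_2_iff insert_subset insertCI)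
  then have "(x, y) \<in> (adj_rel F g)\<^sup>*" using c x unfolding connected_graph_def by blast
  with y(2) obtain z where "(x, z) \<in> adj_rel F g" by (metis converse_rtranclE)
  then show ?thesis using that unfolding adj_rel_def by blast
qed

lemma extension_tree_neighbour_in_tree:
  assumes ext: "extension 1 (card F) V E g F v V' E' g'" and sub: "subgraph U F V E g"
    and tree: "is_tree U F g" and "F \<noteq> {}"
    and n: "n \<in> E' - (E - F)" "g' n = {v, x}"
  shows "x \<in> U"
proof -
  define N where "N = E' - (E - F)"
  have mgU: "multigraph U F g" and cU: "connected_graph U F g" and acyclic: "\<not> has_cycle U F g"
    using tree unfolding is_tree_def by auto
  have vU: "v \<notin> U" using ext sub unfolding extension_def subgraph_def by blast
  have N: "finite N" "card N = card F + 1" using ext unfolding extension_def N_def by auto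
  have "\<exists>n\<in>N. g' n = {v, y}" if y: "y \<in> U" for y
  proof -
    obtain f where "f \<in> F" "y \<in> g f"
      using connected_vertex_incident[OF mgU cU \<open>F \<noteq> {}\<close> y] .
    then show ?thesis using ext unfolding extension_def N_def by blast
  qed
  then obtain h where h: "\<And>y. y \<in> U \<Longrightarrow> h y \<in> N \<and> g' (h y) = {v, y}" by metis
  have "inj_on h U"
  proof (rule inj_onI)
    fix y z assume "y \<in> U" "z \<in> U" "h y = h z"
    with h have "{v, y} = {v, z}" by metis
    then show "y = z" by (auto simp: doubleton_eq_iff)
  qed
  moreover have "card F + 1 \<le> card U"
    by (rule connected_acyclic_card_vertices_ge[OF mgU cU acyclic])
  ultimately have "card N \<le> card (h ` U)" using N(2) by (simp add: card_image)
  then have "h ` U = N" using h N(1) by (intro card_seteq) auto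
  then obtain y where "y \<in> U" "n = h y" using n(1) N_def by blast
  with h n(2) vU have "{v, x} = {v, y}" "y \<noteq> v" by auto
  then show ?thesis using \<open>y \<in> U\<close> by (auto simp: doubleton_eq_iff)
qed

lemma extension_tree_neighbours_linked:
  assumes ext: "extension 1 (card F) V E g F v V' E' g'" and sub: "subgraph U F V E g"
    and tree: "is_tree U F g"
    and n: "n \<in> E' - (E - F)" "g' n = {v, x}" and m: "m \<in> E' - (E - F)" "g' m = {v, y}"
  shows "(x, y) \<in> (adj_rel E g)\<^sup>*"
proof (cases "F = {}")
  case True
  with ext have "card (E' - (E - F)) = 1" unfolding extension_def by simp
  with n(1) m(1) have "n = m" by (metis card_1_singletonE singletonD)
  with n(2) m(2) have "x = y" by (auto simp: doubleton_eq_iff)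
  then show ?thesis by simp
next
  case False
  then have "x \<in> U" "y \<in> U"
    using extension_tree_neighbour_in_tree[OF ext sub tree] n m by blast+
  then have "(x, y) \<in> (adj_rel F g)\<^sup>*" using tree unfolding is_tree_def connected_graph_def by blast
  moreover have "F \<subseteq> E" using sub unfolding subgraph_def by blast
  ultimately show ?thesis using rtrancl_mono[OF adj_rel_mono] by blast
qed

theorem lemma3p1:
  fixes V U V' :: "'a set" and E F E' :: "'e set" and g g' :: "'e \<Rightarrow> 'a set" and v :: 'a
  assumes "simple_graph V E g"
    and "subgraph U F V E g"
    and "is_tree U F g"
    and "extension 1 (card F) V E g F v V' E' g'"
  shows "is_tree V E g \<longleftrightarrow> is_tree V' E' g'"
proof -
  note ext = assms(4)
  have "multigraph V E g" using ext unfolding extension_def by blast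
  moreover have "multigraph V' E' g'" using extension_multigraph[OF ext] .
  moreover have "connected_graph V E g \<longleftrightarrow> connected_graph V' E' g'"
    using extension_connected[OF ext] extension_connected_converse[OF ext]
      extension_tree_neighbours_linked[OF ext assms(2,3)] by auto
  ultimately show ?thesis
    using is_tree_iff_connected_card extension_card_vertices[OF ext] extension_card_edges[OF ext]
    by auto
qed

end
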